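(* If $X$ satisfies $selSS^*_{cd}(\mathcal{O},\mathcal{O})$ (i.e. $X$ is strongly selectively $(a)$), has countable extent, and $|X|<\mathfrak{b}$, then $X$ is selectively strongly star-Menger.
   Context: All spaces are regular. $St(A,\mathcal{U})=\bigcup\{U\in\mathcal{U}:U\cap A\neq\emptyset\}$. $\mathfrak{b}$ is the bounding number. $X$ has countable extent if every closed discrete subset of $X$ is countable. $selSS^*_{cd}(\mathcal{O},\mathcal{O})$: for every sequence $(\mathcal{U}_n:n\in\omega)$ of open covers and every sequence $(D_n:n\in\omega)$ of dense subsets of $X$ there are sets $C_n\subseteq D_n$, closed and discrete in $X$, such that $\{St(C_n,\mathcal{U}_n):n\in\omega\}$ covers $X$. $X$ is selectively strongly star-Menger if for every sequence $(\mathcal{U}_n)$ of open covers and every sequence $(D_n)$ of dense subsets there are finite $F_n\subseteq D_n$ with $\{St(F_n,\mathcal{U}_n):n\in\omega\}$ covering $X$. *)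

theory Defs
  imports "HOL-Analysis.Analysis" "HOL-Library.Equipollence"
begin

definition St :: "'a set \<Rightarrow> 'a set set \<Rightarrow> 'a set" where
  "St A \<U> = \<Union>{U \<in> \<U>. U \<inter> A \<noteq> {}}"

definition open_cover :: "'a topology \<Rightarrow> 'a set set \<Rightarrow> bool" where
  "open_cover X \<U> \<longleftrightarrow> (\<forall>U\<in>\<U>. openin X U) \<and> \<Union>\<U> = topspace X"

definition dense_in :: "'a topology \<Rightarrow> 'a set \<Rightarrow> bool" where
  "dense_in X D \<longleftrightarrow> D \<subseteq> topspace X \<and> X closure_of D = topspace X"

definition closed_discrete :: "'a topology \<Rightarrow> 'a set \<Rightarrow> bool" where
  "closed_discrete X C \<longleftrightarrow> closedin X C \<and>
     (\<forall>x\<in>C. \<exists>U. openin X U \<and> x \<in> U \<and> U \<inter> C = {x})"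

definition countable_extent :: "'a topology \<Rightarrow> bool" where
  "countable_extent X \<longleftrightarrow> (\<forall>C. closed_discrete X C \<longrightarrow> countable C)"

text \<open>|S| < \<b>: every family of functions in \<omega>^\<omega> of cardinality at most |S|
  is \<le>*-bounded (equivalently |S| is below the least size of an unbounded family).\<close>
definition card_less_b :: "'a set \<Rightarrow> bool" where
  "card_less_b S \<longleftrightarrow> (\<forall>F :: (nat \<Rightarrow> nat) set. F \<lesssim> S \<longrightarrow>
      (\<exists>g. \<forall>f\<in>F. \<forall>\<^sub>F n in sequentially. f n \<le> g n))"

definition selSS_cd :: "'a topology \<Rightarrow> bool" where
  "selSS_cd X \<longleftrightarrow> (\<forall>\<U> D. (\<forall>n::nat. open_cover X (\<U> n)) \<and> (\<forall>n. dense_in X (D n)) \<longrightarrow>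
     (\<exists>C. (\<forall>n. C n \<subseteq> D n \<and> closed_discrete X (C n)) \<and>
          topspace X \<subseteq> (\<Union>n. St (C n) (\<U> n))))"

definition selectively_strongly_star_Menger :: "'a topology \<Rightarrow> bool" where
  "selectively_strongly_star_Menger X \<longleftrightarrow>
     (\<forall>\<U> D. (\<forall>n::nat. open_cover X (\<U> n)) \<and> (\<forall>n. dense_in X (D n)) \<longrightarrow>
     (\<exists>F. (\<forall>n. F n \<subseteq> D n \<and> finite (F n)) \<and>
          topspace X \<subseteq> (\<Union>n. St (F n) (\<U> n))))"

end

theory Submission
  imports Defs
begin

text \<open>Using one cover and one dense set at every stage, \<open>selSS_cd\<close> yields countably many closed
  discrete subsets of a dense set whose stars cover; by countable extent their union is a
  countable subset whose star covers. Enumerating these countable sets, every point \<open>x\<close> induces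
  a function in \<open>\<omega>\<^sup>\<omega>\<close>: at stage \<open>n\<close>, the least index of an element whose star contains \<open>x\<close>.
  Since \<open>|X| < \<b>\<close>, one function \<open>g\<close> eventually dominates all of them, and the first \<open>g n + 1\<close>
  elements at stage \<open>n\<close> form the required finite sets.\<close>

lemma St_mono: "A \<subseteq> B \<Longrightarrow> St A \<U> \<subseteq> St B \<U>"
  unfolding St_def by blast

lemma St_UN: "St (\<Union>n. C n) \<U> = (\<Union>n. St (C n) \<U>)"
  unfolding St_def by blast

lemma selSS_cd_countable_star_cover:
  assumes "selSS_cd X" "countable_extent X" "open_cover X \<V>" "dense_in X E"
  obtains C where "C \<subseteq> E" "countable C" "topspace X \<subseteq> St C \<V>"
proof -
  obtain C where C: "\<And>n::nat. C n \<subseteq> E \<and> closed_discrete X (C n)"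
    and cover: "topspace X \<subseteq> (\<Union>n. St (C n) \<V>)"
    using assms(1,3,4) unfolding selSS_cd_def
    by (elim allE[of _ "\<lambda>_. \<V>"] allE[of _ "\<lambda>_. E"]) auto
  have "countable (\<Union>n. C n)"
    using C assms(2) unfolding countable_extent_def by blast
  moreover have "(\<Union>n. C n) \<subseteq> E" using C by blast
  moreover have "topspace X \<subseteq> St (\<Union>n. C n) \<V>" using cover by (simp add: St_UN)
  ultimately show thesis using that by blast
qed

lemma finite_star_selection_below_b:
  fixes C :: "nat \<Rightarrow> 'a set"
  assumes "card_less_b S" and countable: "\<And>n. countable (C n)"
    and cover: "\<And>n. S \<subseteq> St (C n) (\<U> n)"
  shows "\<exists>F. (\<forall>n. F n \<subseteq> C n \<and> finite (F n)) \<and> S \<subseteq> (\<Union>n. St (F n) (\<U> n))"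
proof -
  define f where "f x n = (LEAST k. x \<in> St {from_nat_into (C n) k} (\<U> n))" for x n
  have f_index: "x \<in> St {from_nat_into (C n) (f x n)} (\<U> n)" if "x \<in> S" for x n
  proof -
    have "x \<in> St (C n) (\<U> n)" using cover that by blast
    then obtain c where "c \<in> C n" "x \<in> St {c} (\<U> n)"
      unfolding St_def by blast
    moreover obtain k where "from_nat_into (C n) k = c"
      using from_nat_into_surj[OF countable \<open>c \<in> C n\<close>] by blast
    ultimately have "\<exists>k. x \<in> St {from_nat_into (C n) k} (\<U> n)" by blast
    then show ?thesis unfolding f_def by (rule LeastI_ex)
  qed
  have "f ` S \<lesssim> S" by (rule image_lepoll)
  then obtain g where g: "\<And>x. x \<in> S \<Longrightarrow> \<forall>\<^sub>F n in sequentially. f x n \<le> g n"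
    using assms(1) unfolding card_less_b_def by (elim allE[of _ "f ` S"]) auto
  \<comment> \<open>Intersecting with \<open>C n\<close> matters only for \<open>C n = {}\<close>, where \<open>from_nat_into\<close> is unspecified.\<close>
  define F where "F n = from_nat_into (C n) ` {..g n} \<inter> C n" for n
  have "F n \<subseteq> C n" "finite (F n)" for n
    unfolding F_def by simp_all
  moreover have "S \<subseteq> (\<Union>n. St (F n) (\<U> n))"
  proof
    fix x assume "x \<in> S"
    then obtain N where "\<forall>n\<ge>N. f x n \<le> g n"
      using g unfolding eventually_sequentially by blast
    then have "f x N \<le> g N" by simp
    moreover have "C N \<noteq> {}"
      using cover \<open>x \<in> S\<close> unfolding St_def by blast
    then have "from_nat_into (C N) (f x N) \<in> C N" by (rule from_nat_into)
    ultimately have "{from_nat_into (C N) (f x N)} \<subseteq> F N"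
      unfolding F_def by blast
    then have "x \<in> St (F N) (\<U> N)"
      using f_index[OF \<open>x \<in> S\<close>] by (rule St_mono[THEN subsetD])
    then show "x \<in> (\<Union>n. St (F n) (\<U> n))" by blast
  qed
  ultimately show ?thesis by blast
qed

theorem mainTheorem14:
  fixes X :: "'a topology"
  assumes "regular_space X"
    and "selSS_cd X"
    and "countable_extent X"
    and "card_less_b (topspace X)"
  shows "selectively_strongly_star_Menger X"
  unfolding selectively_strongly_star_Menger_def
proof (intro allI impI)
  fix \<U> :: "nat \<Rightarrow> 'a set set" and D :: "nat \<Rightarrow> 'a set"
  assume "(\<forall>n. open_cover X (\<U> n)) \<and> (\<forall>n. dense_in X (D n))"
  then have cover: "open_cover X (\<U> n)" and dense: "dense_in X (D n)" for n
    by simp_all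
  have "\<exists>C. C \<subseteq> D n \<and> countable C \<and> topspace X \<subseteq> St C (\<U> n)" for n
    by (rule selSS_cd_countable_star_cover[OF assms(2,3) cover dense]) blast
  then have "\<forall>n. \<exists>C. C \<subseteq> D n \<and> countable C \<and> topspace X \<subseteq> St C (\<U> n)" ..
  then obtain C where "\<forall>n. C n \<subseteq> D n \<and> countable (C n) \<and> topspace X \<subseteq> St (C n) (\<U> n)"
    by (rule choice[THEN exE])
  then have C: "\<And>n. C n \<subseteq> D n" "\<And>n. countable (C n)"
    "\<And>n. topspace X \<subseteq> St (C n) (\<U> n)"
    by auto
  obtain F where "\<forall>n. F n \<subseteq> C n \<and> finite (F n)" "topspace X \<subseteq> (\<Union>n. St (F n) (\<U> n))"
    using finite_star_selection_below_b[where C = C and \<U> = \<U>, OF assms(4) C(2,3)] by blast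
  then show "\<exists>F. (\<forall>n. F n \<subseteq> D n \<and> finite (F n)) \<and> topspace X \<subseteq> (\<Union>n. St (F n) (\<U> n))"
    using C(1) by blast
qed

end
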